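(* Let $\xi_1,\xi_2,\dots$ be i.i.d. standard Gaussian random variables. There is a constant $c_1>0$ such that for all $L>0$ and all integers $N\ge1$ with $2L\le N$, $$-\log\mathbb{E}\,e^{-L\max_{i=1,\dots,N}|\xi_i|}\le c_1L\sqrt{\log(N/L)}.$$ Moreover, there is a constant $c_2>0$ such that for all $L\ge1$ and all integers $N\ge1$ with $2L\le N$, $$-\log\mathbb{E}\,e^{-L\max_{i=1,\dots,N}|\xi_i|}\ge c_2L\sqrt{\log(N/L)}.$$ *)

theory Defs
  imports "HOL-Probability.Probability"
begin

definition gauss_max_laplace :: "real \<Rightarrow> nat \<Rightarrow> real" where
  "gauss_max_laplace L N =
     (\<integral>x. exp (- L * Max ((\<lambda>i. \<bar>x i\<bar>) ` {0..<N}))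
        \<partial>(PiM {0..<N} (\<lambda>_. std_normal_distribution)))"

end

theory Submission
  imports Defs
begin

text \<open>Put \<open>M = max |\<xi>_i|\<close> and \<open>q(t) = P(|\<xi>| \<le> t)\<close>. Splitting on the event \<open>M \<le> t\<close> gives
  \<open>exp(-L t) q(t)^N \<le> E exp(-L M) \<le> q(t)^N + exp(-L t)\<close> for every \<open>t\<close>, and the Gaussian tail
  \<open>1 - q(t)\<close> lies between \<open>\<phi>(t + 1)\<close> and \<open>2 exp(-t^2/2)\<close>.
  With \<open>t = sqrt (2 log (2N/L))\<close> the tail is at most \<open>L/N\<close>, so \<open>q(t)^N \<ge> exp(-2L)\<close>, which gives
  the upper bound. With \<open>t = sqrt (log (N/L) / 2)\<close> the tail is at least \<open>sqrt (L/N) / 9\<close>, so both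
  \<open>q(t)^N\<close> and \<open>exp(-L t)\<close> are at most \<open>exp(-L sqrt (log (N/L)) / 9)\<close>; when this exponent is
  small, \<open>E exp(-L M) \<le> 11/12\<close> instead, because \<open>q(1/2) \<le> 1/2\<close> and \<open>N \<ge> 2\<close>.\<close>

lemma measure_std_normal_eq_integral:
  assumes [measurable]: "A \<in> sets borel"
  shows "measure std_normal_distribution A = (\<integral>x. std_normal_density x * indicator A x \<partial>lborel)"
proof -
  have "measure std_normal_distribution A = (\<integral>x. indicator A x \<partial>std_normal_distribution)"
    by simp
  then show ?thesis by (subst (asm) integral_density) auto
qed

lemma integrable_std_normal_density_indicator:
  assumes [measurable]: "A \<in> sets borel"
  shows "integrable lborel (\<lambda>x. std_normal_density x * indicator A x)"
  using integrable_mult_indicator[of A lborel std_normal_density] by (simp add: mult.commute)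

lemma measure_std_normal_centered_le:
  assumes "0 \<le> t"
  shows "measure std_normal_distribution {-t..t} \<le> 2 * t / sqrt (2 * pi)"
proof -
  have "measure std_normal_distribution {-t..t} = (\<integral>x. std_normal_density x * indicator {-t..t} x \<partial>lborel)"
    by (simp add: measure_std_normal_eq_integral)
  also have "\<dots> \<le> (\<integral>x. 1 / sqrt (2 * pi) * indicator {-t..t} x \<partial>lborel)"
    using assms
    by (intro integral_mono integrable_std_normal_density_indicator integrable_mult_right
          integrable_real_indicator)
       (auto simp: std_normal_density_def divide_right_mono split: split_indicator)
  also have "\<dots> = 2 * t / sqrt (2 * pi)" using assms by simp
  finally show ?thesis .
qed

lemma std_normal_tail_eq_integral:
  "1 - measure std_normal_distribution {-t..t}
     = (\<integral>x. std_normal_density x * (1 - indicator {-t..t} x) \<partial>lborel)"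
proof -
  have "(\<integral>x. std_normal_density x * (1 - indicator {-t..t} x) \<partial>lborel)
      = (\<integral>x. std_normal_density x \<partial>lborel) - (\<integral>x. std_normal_density x * indicator {-t..t} x \<partial>lborel)"
    using integrable_normal_density integrable_std_normal_density_indicator[of "{-t..t}"]
    by (simp add: right_diff_distrib)
  then show ?thesis by (simp add: measure_std_normal_eq_integral)
qed

lemma integrable_std_normal_tail:
  "integrable lborel (\<lambda>x. std_normal_density x * (1 - indicator {-t..t} x))"
  by (auto intro!: integrable_std_normal_density_indicator simp: right_diff_distrib)

lemma std_normal_density_le_tail:
  assumes "0 \<le> t"
  shows "std_normal_density (t + 1) \<le> 1 - measure std_normal_distribution {-t..t}"
proof -
  have "std_normal_density (t + 1) = (\<integral>x. std_normal_density (t + 1) * indicator {t<..t+1} x \<partial>lborel)"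
    by simp
  also have "\<dots> \<le> (\<integral>x. std_normal_density x * (1 - indicator {-t..t} x) \<partial>lborel)"
  proof (rule integral_mono[OF _ integrable_std_normal_tail])
    fix x
    show "std_normal_density (t + 1) * indicator {t<..t+1} x \<le> std_normal_density x * (1 - indicator {-t..t} x)"
    proof (cases "x \<in> {t<..t+1}")
      case True
      then have "x\<^sup>2 \<le> (t + 1)\<^sup>2" using assms by (intro power_mono) auto
      then show ?thesis using True by (auto simp: std_normal_density_def divide_right_mono)
    qed (auto simp: indicator_def)
  qed auto
  finally show ?thesis by (simp add: std_normal_tail_eq_integral)
qed

lemma exp_neg_square_half_le:
  fixes t x :: real
  assumes "0 \<le> t" "t \<le> \<bar>x\<bar>"
  shows "exp (- x\<^sup>2 / 2) \<le> exp (- t\<^sup>2 / 2) * (exp (- (x - t)\<^sup>2 / 2) + exp (- (x + t)\<^sup>2 / 2))"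
proof -
  have "t\<^sup>2 + (\<bar>x\<bar> - t)\<^sup>2 \<le> x\<^sup>2"
    using mult_nonneg_nonneg[of t "\<bar>x\<bar> - t"] assms by (simp add: power2_eq_square algebra_simps)
  then have "exp (- x\<^sup>2 / 2) \<le> exp (- t\<^sup>2 / 2) * exp (- (\<bar>x\<bar> - t)\<^sup>2 / 2)"
    by (simp add: exp_add[symmetric])
  also have "(\<bar>x\<bar> - t)\<^sup>2 = (x - t)\<^sup>2 \<or> (\<bar>x\<bar> - t)\<^sup>2 = (x + t)\<^sup>2"
    by (cases "0 \<le> x") (simp_all add: power2_eq_square algebra_simps)
  then have "exp (- (\<bar>x\<bar> - t)\<^sup>2 / 2) \<le> exp (- (x - t)\<^sup>2 / 2) + exp (- (x + t)\<^sup>2 / 2)"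
    by (smt (verit) exp_gt_zero)
  finally show ?thesis by simp
qed

lemma std_normal_tail_le:
  assumes "0 \<le> t"
  shows "1 - measure std_normal_distribution {-t..t} \<le> 2 * exp (- t\<^sup>2 / 2)"
proof -
  have "(\<integral>x. std_normal_density x * (1 - indicator {-t..t} x) \<partial>lborel)
      \<le> (\<integral>x. exp (- t\<^sup>2 / 2) * (normal_density t 1 x + normal_density (-t) 1 x) \<partial>lborel)"
  proof (rule integral_mono[OF integrable_std_normal_tail])
    fix x
    show "std_normal_density x * (1 - indicator {-t..t} x)
        \<le> exp (- t\<^sup>2 / 2) * (normal_density t 1 x + normal_density (-t) 1 x)"
    proof (cases "x \<in> {-t..t}")
      case False
      then have "exp (- x\<^sup>2 / 2) \<le> exp (- t\<^sup>2 / 2) * (exp (- (x - t)\<^sup>2 / 2) + exp (- (x + t)\<^sup>2 / 2))"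
        using assms by (intro exp_neg_square_half_le) auto
      then show ?thesis using False
        by (simp add: normal_density_def std_normal_density_def field_simps)
    qed (auto intro!: add_nonneg_nonneg)
  qed auto
  also have "\<dots> = 2 * exp (- t\<^sup>2 / 2)" by simp
  finally show ?thesis by (simp add: std_normal_tail_eq_integral)
qed

lemma exp_neg_max_abs_bounds:
  fixes x :: "'i \<Rightarrow> real" and t :: real
  assumes "finite I" "I \<noteq> {}" "0 \<le> L"
  defines "m \<equiv> Max ((\<lambda>i. \<bar>x i\<bar>) ` I)" and "ind \<equiv> \<Prod>i\<in>I. indicator {-t..t} (x i) :: real"
  shows "exp (- L * t) * ind \<le> exp (- L * m)" and "exp (- L * m) \<le> ind + exp (- L * t)"
proof -
  have m_ge: "\<bar>x i\<bar> \<le> m" if "i \<in> I" for i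
    unfolding m_def using assms(1) that by (intro Max_ge) auto
  have "exp (- L * t) * ind \<le> exp (- L * m) \<and> exp (- L * m) \<le> ind + exp (- L * t)"
  proof (cases "\<forall>i\<in>I. x i \<in> {-t..t}")
    case True
    then have "m \<le> t" unfolding m_def using assms(1,2) by (subst Max_le_iff) auto
    moreover from assms(2) obtain i where "i \<in> I" by blast
    then have "0 \<le> m" using m_ge[of i] by linarith
    moreover have "ind = 1" unfolding ind_def using True by simp
    ultimately show ?thesis
      using assms(3) by (simp add: mult_left_mono add_increasing2 mult_nonneg_nonneg)
  next
    case False
    then obtain j where "j \<in> I" "t < \<bar>x j\<bar>" by auto
    then have "t < m" using m_ge by fastforce
    moreover have "ind = 0" unfolding ind_def using False \<open>finite I\<close> by (auto simp: indicator_def)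
    ultimately show ?thesis using assms(3) by (simp add: mult_left_mono)
  qed
  then show "exp (- L * t) * ind \<le> exp (- L * m)" and "exp (- L * m) \<le> ind + exp (- L * t)"
    by auto
qed

context real_distribution
begin

lemma integral_PiM_prod_indicator:
  assumes "finite I" "A \<in> sets borel"
  shows "(\<integral>x. (\<Prod>i\<in>I. indicator A (x i) :: real) \<partial>PiM I (\<lambda>_. M)) = measure M A ^ card I"
proof -
  interpret P: product_prob_space "\<lambda>_. M" by (rule product_prob_spaceI) unfold_locales
  have "integrable M (indicator A :: real \<Rightarrow> real)"
    using assms(2) by (intro integrable_real_indicator) (auto simp: emeasure_eq_measure)
  then show ?thesis
    using P.product_integral_prod[of I "\<lambda>_. indicator A :: real \<Rightarrow> real"] assms by simp
qed

lemma integrable_exp_neg_max_abs: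
  assumes "finite I" "I \<noteq> {}" "0 \<le> L"
  shows "integrable (PiM I (\<lambda>_. M)) (\<lambda>x. exp (- L * Max ((\<lambda>i. \<bar>x i\<bar>) ` I)))"
proof -
  interpret P: prob_space "PiM I (\<lambda>_. M)" by (rule prob_space_PiM) unfold_locales
  have "(\<lambda>x. Max ((\<lambda>i. \<bar>x i\<bar>) ` I)) \<in> borel_measurable (PiM I (\<lambda>_. M))"
    using assms(1,2) by (intro borel_measurable_Max) auto
  moreover have "exp (- L * Max ((\<lambda>i. \<bar>x i\<bar>) ` I)) \<le> 1" for x
  proof -
    have "0 \<le> Max ((\<lambda>i. \<bar>x i\<bar>) ` I)" using assms(1,2) by (subst Max_ge_iff) auto
    then show ?thesis using assms(3) by simp
  qed
  ultimately show ?thesis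
    by (intro P.integrable_const_bound[where B=1]) auto
qed

lemma integrable_PiM_prod_indicator:
  assumes "finite I" "A \<in> sets borel"
  shows "integrable (PiM I (\<lambda>_. M)) (\<lambda>x. \<Prod>i\<in>I. indicator A (x i) :: real)"
proof -
  interpret P: prob_space "PiM I (\<lambda>_. M)" by (rule prob_space_PiM) unfold_locales
  have "(\<lambda>x. \<Prod>i\<in>I. indicator A (x i) :: real) \<in> borel_measurable (PiM I (\<lambda>_. M))"
    using assms(2) by measurable
  then show ?thesis
    by (intro P.integrable_const_bound[where B=1])
       (auto simp: abs_prod prod_le_1 split: split_indicator)
qed

lemma laplace_max_abs_ge:
  assumes "finite I" "I \<noteq> {}" "0 \<le> L"
  shows "exp (- L * t) * measure M {-t..t} ^ card I
      \<le> (\<integral>x. exp (- L * Max ((\<lambda>i. \<bar>x i\<bar>) ` I)) \<partial>PiM I (\<lambda>_. M))"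
proof -
  interpret P: prob_space "PiM I (\<lambda>_. M)" by (rule prob_space_PiM) unfold_locales
  have "exp (- L * t) * measure M {-t..t} ^ card I
      = (\<integral>x. exp (- L * t) * (\<Prod>i\<in>I. indicator {-t..t} (x i) :: real) \<partial>PiM I (\<lambda>_. M))"
    using assms(1) by (simp add: integral_PiM_prod_indicator)
  also have "\<dots> \<le> (\<integral>x. exp (- L * Max ((\<lambda>i. \<bar>x i\<bar>) ` I)) \<partial>PiM I (\<lambda>_. M))"
    using assms
    by (intro integral_mono integrable_exp_neg_max_abs exp_neg_max_abs_bounds(1) integrable_mult_right
          integrable_PiM_prod_indicator) auto
  finally show ?thesis .
qed

lemma laplace_max_abs_le:
  assumes "finite I" "I \<noteq> {}" "0 \<le> L"
  shows "(\<integral>x. exp (- L * Max ((\<lambda>i. \<bar>x i\<bar>) ` I)) \<partial>PiM I (\<lambda>_. M))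
      \<le> measure M {-t..t} ^ card I + exp (- L * t)"
proof -
  interpret P: prob_space "PiM I (\<lambda>_. M)" by (rule prob_space_PiM) unfold_locales
  have int_ind: "integrable (PiM I (\<lambda>_. M)) (\<lambda>x. \<Prod>i\<in>I. indicator {-t..t} (x i) :: real)"
    using assms(1) by (intro integrable_PiM_prod_indicator) auto
  have "(\<integral>x. exp (- L * Max ((\<lambda>i. \<bar>x i\<bar>) ` I)) \<partial>PiM I (\<lambda>_. M))
      \<le> (\<integral>x. (\<Prod>i\<in>I. indicator {-t..t} (x i) :: real) + exp (- L * t) \<partial>PiM I (\<lambda>_. M))"
    using assms int_ind
    by (intro integral_mono integrable_exp_neg_max_abs exp_neg_max_abs_bounds(2)) auto
  also have "\<dots> = measure M {-t..t} ^ card I + exp (- L * t)"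
    using assms(1) int_ind by (simp add: integral_PiM_prod_indicator P.prob_space)
  finally show ?thesis .
qed

end

lemma gauss_max_laplace_ge_interval:
  assumes "0 \<le> L" "1 \<le> N"
  shows "exp (- L * t) * measure std_normal_distribution {-t..t} ^ N \<le> gauss_max_laplace L N"
  using real_distribution.laplace_max_abs_ge[OF real_dist_normal_dist, of "{0..<N}"] assms
  unfolding gauss_max_laplace_def by simp

lemma gauss_max_laplace_le_interval:
  assumes "0 \<le> L" "1 \<le> N"
  shows "gauss_max_laplace L N \<le> measure std_normal_distribution {-t..t} ^ N + exp (- L * t)"
  using real_distribution.laplace_max_abs_le[OF real_dist_normal_dist, of "{0..<N}"] assms
  unfolding gauss_max_laplace_def by simp

lemma exp_le_one_minus_power:
  fixes x :: real
  assumes "0 \<le> x" "x \<le> 1/2"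
  shows "exp (- 2 * real n * x) \<le> (1 - x) ^ n"
proof -
  have "2 * x\<^sup>2 \<le> x"
    using mult_right_mono[of "2 * x" 1 x] assms by (simp add: power2_eq_square mult.assoc)
  then have "- 2 * x \<le> - x - 2 * x\<^sup>2" by simp
  also have "\<dots> \<le> ln (1 - x)" by (rule ln_one_minus_pos_lower_bound[OF assms])
  finally have "exp (- 2 * real n * x) \<le> exp (n * ln (1 - x))"
    using mult_left_mono[of "- 2 * x" "ln (1 - x)" n] by simp
  also have "\<dots> = (1 - x) ^ n"
    using assms by (simp add: exp_of_nat_mult)
  finally show ?thesis .
qed

lemma one_minus_power_le_exp:
  fixes x :: real
  assumes "x \<le> 1"
  shows "(1 - x) ^ n \<le> exp (- real n * x)"
proof -
  have "(1 - x) ^ n \<le> exp (- x) ^ n"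
    using assms exp_minus_ge[of x] by (intro power_mono) auto
  then show ?thesis by (simp add: exp_of_nat_mult[symmetric])
qed

lemma std_normal_density_ge:
  assumes "0 \<le> t"
  shows "exp (- t\<^sup>2) / 9 \<le> std_normal_density (t + 1)"
proof -
  have "(t + 1)\<^sup>2 \<le> 2 * t\<^sup>2 + 2"
    using sum_squares_ge_zero[of "t - 1" 0] by (simp add: power2_eq_square algebra_simps)
  then have "exp (- t\<^sup>2) / exp 1 \<le> exp (- (t + 1)\<^sup>2 / 2)"
    by (simp add: exp_diff[symmetric])
  moreover have "exp (- t\<^sup>2) / 9 \<le> exp (- t\<^sup>2) / exp 1 / 3"
    using exp_le by (simp add: field_simps mult_left_mono)
  moreover have "sqrt (2 * pi) \<le> 3"
    using pi_less_4 by (intro real_le_lsqrt) auto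
  then have "exp (- (t + 1)\<^sup>2 / 2) / 3 \<le> std_normal_density (t + 1)"
    by (simp add: std_normal_density_def field_simps mult_left_mono)
  ultimately show ?thesis by (smt (verit) divide_right_mono)
qed

lemma gauss_max_laplace_ge_exp:
  assumes "0 < L" "1 \<le> N" "2 * L \<le> real N"
  shows "exp (- (L * sqrt (2 * ln (2 * real N / L)) + 2 * L)) \<le> gauss_max_laplace L N"
proof -
  define t where "t = sqrt (2 * ln (2 * real N / L))"
  define x where "x = L / real N"
  have x: "0 \<le> x" "x \<le> 1/2" and Nx: "real N * x = L"
    using assms by (auto simp: x_def field_simps)
  have "0 \<le> ln (2 * real N / L)" using assms by (simp add: field_simps)
  then have t: "0 \<le> t" "exp (- t\<^sup>2 / 2) = x / 2"
    using assms by (simp_all add: t_def x_def exp_minus field_simps)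
  then have "1 - x \<le> measure std_normal_distribution {-t..t}"
    using std_normal_tail_le[of t] by simp
  then have "(1 - x) ^ N \<le> measure std_normal_distribution {-t..t} ^ N"
    using x by (intro power_mono) auto
  moreover have "exp (- 2 * L) \<le> (1 - x) ^ N"
    using exp_le_one_minus_power[OF x, of N] Nx by (simp add: mult.assoc)
  ultimately have q_pow: "exp (- 2 * L) \<le> measure std_normal_distribution {-t..t} ^ N"
    by linarith
  have "exp (- (L * t + 2 * L)) = exp (- L * t) * exp (- 2 * L)"
    by (simp add: exp_add[symmetric])
  also have "\<dots> \<le> exp (- L * t) * measure std_normal_distribution {-t..t} ^ N"
    using q_pow by simp
  also have "\<dots> \<le> gauss_max_laplace L N"
    using assms by (intro gauss_max_laplace_ge_interval) auto
  finally show ?thesis unfolding t_def .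
qed

lemma neg_ln_gauss_max_laplace_le:
  assumes "0 < L" "1 \<le> N" "2 * L \<le> real N"
  shows "- ln (gauss_max_laplace L N) \<le> 5 * L * sqrt (ln (real N / L))"
proof -
  define s where "s = ln (real N / L)"
  have "ln 2 \<le> s"
    unfolding s_def using assms by (subst ln_le_cancel_iff) (auto simp: field_simps)
  then have s: "ln 2 \<le> s" "2 / 3 \<le> s"
    using ln2_ge_two_thirds by auto
  have "ln (2 * real N / L) = ln 2 + s"
    unfolding s_def using assms by (simp add: ln_mult times_divide_eq_right[symmetric] del: times_divide_eq_right)
  then have t_le: "sqrt (2 * ln (2 * real N / L)) \<le> 2 * sqrt s"
    using s by (intro real_le_lsqrt) (auto simp: power_mult_distrib)
  have "2 / 3 \<le> sqrt s"
    using s by (intro real_le_rsqrt) (auto simp: power2_eq_square)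
  then have "L * sqrt (2 * ln (2 * real N / L)) + L * 2 \<le> L * (2 * sqrt s) + L * (3 * sqrt s)"
    using t_le assms(1) by (intro add_mono mult_left_mono) auto
  then have "L * sqrt (2 * ln (2 * real N / L)) + 2 * L \<le> 5 * L * sqrt s"
    using assms(1) by (simp add: algebra_simps)
  moreover have "exp (- (L * sqrt (2 * ln (2 * real N / L)) + 2 * L)) \<le> gauss_max_laplace L N"
    using assms by (rule gauss_max_laplace_ge_exp)
  then have "- ln (gauss_max_laplace L N) \<le> L * sqrt (2 * ln (2 * real N / L)) + 2 * L"
    by (smt (verit) exp_gt_zero ln_exp ln_le_cancel_iff)
  ultimately show ?thesis unfolding s_def by simp
qed

lemma gauss_max_laplace_le_exp:
  assumes "1 \<le> L" "1 \<le> N" "2 * L \<le> real N"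
  shows "gauss_max_laplace L N \<le> 2 * exp (- (L * sqrt (ln (real N / L)) / 9))"
proof -
  define s where "s = ln (real N / L)"
  define t where "t = sqrt (s / 2)"
  define A where "A = L * sqrt s / 9"
  define p where "p = exp (- s / 2) / 9"
  have s: "0 \<le> s" "real N = L * exp s"
    using assms by (auto simp: s_def field_simps)
  have t: "0 \<le> t" "t\<^sup>2 = s / 2"
    using s by (auto simp: t_def)
  have "p \<le> 1 - measure std_normal_distribution {-t..t}"
    using std_normal_density_ge[OF t(1)] std_normal_density_le_tail[OF t(1)] t(2)
    by (simp add: p_def)
  then have "measure std_normal_distribution {-t..t} ^ N \<le> (1 - p) ^ N"
    by (intro power_mono) auto
  also have "\<dots> \<le> exp (- real N * p)"
  proof (rule one_minus_power_le_exp)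
    have "exp (- s / 2) \<le> 1" using s(1) by simp
    then show "p \<le> 1" unfolding p_def by linarith
  qed
  also have "\<dots> \<le> exp (- A)"
  proof -
    have "sqrt s \<le> 1 + s / 2"
      using s(1) sum_squares_ge_zero[of "s / 2" 0]
      by (intro real_le_lsqrt) (auto simp: power2_eq_square algebra_simps)
    also have "\<dots> \<le> exp (s / 2)" by (rule exp_ge_add_one_self)
    finally have "A \<le> L * exp (s / 2) / 9"
      unfolding A_def using assms(1) by (simp add: divide_right_mono)
    also have "\<dots> = real N * p"
      by (simp add: s(2) p_def mult_exp_exp)
    finally show ?thesis by simp
  qed
  finally have "measure std_normal_distribution {-t..t} ^ N \<le> exp (- A)" .
  moreover have "A \<le> L * t"
  proof -
    have "sqrt s / 9 = sqrt (s / 81)" by (simp add: real_sqrt_divide)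
    also have "\<dots> \<le> t" unfolding t_def using s(1) by simp
    finally have "sqrt s / 9 \<le> t" .
    then show ?thesis unfolding A_def using assms(1) by (simp add: mult_left_mono)
  qed
  then have "exp (- L * t) \<le> exp (- A)" by simp
  moreover have "gauss_max_laplace L N \<le> measure std_normal_distribution {-t..t} ^ N + exp (- L * t)"
    using assms by (intro gauss_max_laplace_le_interval) auto
  ultimately show ?thesis unfolding A_def s_def by linarith
qed

lemma gauss_max_laplace_le_const:
  assumes "1 \<le> L" "2 \<le> N"
  shows "gauss_max_laplace L N \<le> 11 / 12"
proof -
  let ?q = "measure std_normal_distribution {- (1 / 2)..1 / 2}"
  have "?q \<le> 1 / sqrt (2 * pi)"
    using measure_std_normal_centered_le[of "1 / 2"] by simp
  also have "\<dots> \<le> 1 / 2"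
    using pi_ge_two by (intro divide_left_mono real_le_rsqrt) (auto simp: power2_eq_square)
  finally have q: "?q \<le> 1 / 2" .
  then have "?q ^ N \<le> ?q ^ 2"
    using assms(2) by (intro power_decreasing) auto
  also have "\<dots> \<le> (1 / 2) ^ 2"
    using q by (intro power_mono) auto
  finally have "?q ^ N \<le> (1 / 2) ^ 2" .
  moreover have "exp (- L * (1 / 2)) \<le> 2 / 3"
  proof -
    have "3 / 2 \<le> exp (1 / 2 :: real)" using exp_ge_add_one_self[of "1 / 2 :: real"] by simp
    then have "exp (- (1 / 2 :: real)) \<le> 2 / 3" by (simp add: exp_minus field_simps)
    moreover have "exp (- L * (1 / 2)) \<le> exp (- (1 / 2))" using assms(1) by simp
    ultimately show ?thesis by linarith
  qed
  moreover have "gauss_max_laplace L N \<le> ?q ^ N + exp (- L * (1 / 2))"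
    using assms by (intro gauss_max_laplace_le_interval) auto
  ultimately show ?thesis by (simp add: power2_eq_square)
qed

lemma neg_ln_gauss_max_laplace_ge:
  assumes "1 \<le> L" "1 \<le> N" "2 * L \<le> real N"
  shows "1 / 216 * L * sqrt (ln (real N / L)) \<le> - ln (gauss_max_laplace L N)"
proof -
  define A where "A = L * sqrt (ln (real N / L)) / 9"
  have E_pos: "0 < gauss_max_laplace L N"
    using gauss_max_laplace_ge_exp[of L N] assms by (smt (verit) exp_gt_zero)
  show ?thesis
  proof (cases "2 \<le> A")
    case True
    have "ln (gauss_max_laplace L N) \<le> ln (2 * exp (- A))"
      using gauss_max_laplace_le_exp[OF assms] E_pos by (simp add: A_def)
    also have "\<dots> = ln 2 - A" by (simp add: ln_mult)
    finally show ?thesis using True ln_2_less_1 unfolding A_def by simp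
  next
    case False
    have "ln (gauss_max_laplace L N) \<le> gauss_max_laplace L N - 1"
      using E_pos by (rule ln_le_minus_one)
    moreover have "gauss_max_laplace L N \<le> 11 / 12"
      using assms by (intro gauss_max_laplace_le_const) auto
    ultimately show ?thesis using False unfolding A_def by simp
  qed
qed

theorem lemma6:
  shows "(\<exists>c1>0. \<forall>L::real. \<forall>N::nat. L > 0 \<and> N \<ge> 1 \<and> 2 * L \<le> real N \<longrightarrow>
            - ln (gauss_max_laplace L N) \<le> c1 * L * sqrt (ln (real N / L)))
       \<and> (\<exists>c2>0. \<forall>L::real. \<forall>N::nat. L \<ge> 1 \<and> N \<ge> 1 \<and> 2 * L \<le> real N \<longrightarrow>
            - ln (gauss_max_laplace L N) \<ge> c2 * L * sqrt (ln (real N / L)))"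
proof
  show "\<exists>c1>0. \<forall>L::real. \<forall>N::nat. L > 0 \<and> N \<ge> 1 \<and> 2 * L \<le> real N \<longrightarrow>
          - ln (gauss_max_laplace L N) \<le> c1 * L * sqrt (ln (real N / L))"
    using neg_ln_gauss_max_laplace_le by (intro exI[of _ 5]) auto
  show "\<exists>c2>0. \<forall>L::real. \<forall>N::nat. L \<ge> 1 \<and> N \<ge> 1 \<and> 2 * L \<le> real N \<longrightarrow>
          - ln (gauss_max_laplace L N) \<ge> c2 * L * sqrt (ln (real N / L))"
    using neg_ln_gauss_max_laplace_ge by (intro exI[of _ "1 / 216"]) auto
qed

end
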